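(* Let $w \in \mathfrak{S}_n$ and $i \in \textsf{supp}(w)$. If $i$ is unconfined in some reduced word $s$ of $w$, then the letter $i$ appears exactly once in every reduced word of $w$, and $i$ is unconfined in every reduced word of $w$.
   Context: $\sigma_i$ ($1\le i\le n-1$) is the simple transposition swapping $i$ and $i+1$; products are compositions of maps. A reduced word of $w$ is a word $i_1\cdots i_\ell$ of minimal length with $w=\sigma_{i_1}\cdots\sigma_{i_\ell}$; $R(w)$ is the set of reduced words. $\textsf{supp}(w)$ is the set of letters appearing in (any) reduced word of $w$. Given a reduced word $s$ of $w$ in which the letter $i$ appears exactly once, $i$ is called unconfined in $s$ if that occurrence of $i$ does not lie between two occurrences of $i+1$ in $s$ and does not lie between two occurrences of $i-1$ in $s$. *)

theory Defs
  imports "HOL-Combinatorics.Transposition" "HOL-Combinatorics.Permutations"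
begin

text \<open>The symmetric group S_n is modelled as the permutations of {1..n} (functions nat => nat
  that permute {1..n}). The simple transposition sigma_i swaps i and i+1.\<close>

definition sigma :: "nat \<Rightarrow> nat \<Rightarrow> nat" where
  "sigma i = transpose i (Suc i)"

definition word_perm :: "nat list \<Rightarrow> (nat \<Rightarrow> nat)" where
  "word_perm s = foldr (\<lambda>i f. sigma i \<circ> f) s id"

definition is_word :: "nat \<Rightarrow> nat list \<Rightarrow> bool" where
  "is_word n s \<longleftrightarrow> set s \<subseteq> {1..<n}"

definition reduced_word :: "nat \<Rightarrow> (nat \<Rightarrow> nat) \<Rightarrow> nat list \<Rightarrow> bool" where
  "reduced_word n w s \<longleftrightarrow> is_word n s \<and> word_perm s = w \<and>
     (\<forall>t. is_word n t \<and> word_perm t = w \<longrightarrow> length s \<le> length t)"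

definition R :: "nat \<Rightarrow> (nat \<Rightarrow> nat) \<Rightarrow> nat list set" where
  "R n w = {s. reduced_word n w s}"

definition supp :: "nat \<Rightarrow> (nat \<Rightarrow> nat) \<Rightarrow> nat set" where
  "supp n w = (\<Union>s\<in>R n w. set s)"

definition between :: "nat list \<Rightarrow> nat \<Rightarrow> nat \<Rightarrow> bool" where
  "between s i j \<longleftrightarrow> (\<exists>a p b. a < p \<and> p < b \<and> b < length s \<and>
       s ! p = i \<and> s ! a = j \<and> s ! b = j)"

text \<open>Unconfined: i appears exactly once, and that occurrence is not between two
  occurrences of i+1 nor between two occurrences of i-1.  (For i = 1, i - 1 = 0 is not
  a letter, so that condition is vacuous.)\<close>

definition unconfined :: "nat list \<Rightarrow> nat \<Rightarrow> bool" where
  "unconfined s i \<longleftrightarrow> count_list s i = 1 \<and>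
     \<not> between s i (Suc i) \<and> \<not> (i \<ge> 2 \<and> between s i (i - 1))"

end

theory Submission
  imports Defs
begin

text \<open>Split the reduced word s as u i v with i not in u, v, and let a, b be the preimages of
  i, i+1 under v.  Then w sends exactly one element, a, from {1..i} above i and exactly one, b,
  from above i into {1..i}.  For reduced u and v, unconfinedness of i in s (u or v avoids i+1, and
  u or v avoids i-1) reads (w a = i+1 or b = i+1) and (w b = i or a = i): a condition on w alone.

  Reduced words are the words whose length is the inversion number, so along a reduced word the
  ranks #{x \<le> m. f x \<le> i} never increase, and an occurrence of i creating the inversion (p, q)
  makes them drop strictly for p \<le> m < q.  Comparing with the ranks of w gives a \<le> p < q \<le> b;
  the same argument for the reversed word, a reduced word of the inverse, gives
  w b \<le> w q < w p \<le> w a, and the condition above then forces (p, q) = (a, b).  Two occurrences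
  of i cannot both create (a, b), so i occurs once in every reduced word t of w, and as the
  condition only depends on w, it is unconfined in t as well.\<close>

lemma sigma_apply: "sigma j x = (if x = j then Suc j else if x = Suc j then j else x)"
  by (simp add: sigma_def transpose_def)

lemma sigma_sigma [simp]: "sigma j (sigma j x) = x"
  by (simp add: sigma_def)

lemma sigma_le_iff_other: "k \<noteq> j \<Longrightarrow> sigma k x \<le> j \<longleftrightarrow> x \<le> j"
  by (auto simp: sigma_apply)

lemma sigma_le_iff_same: "sigma j x \<le> j \<longleftrightarrow> x < j \<or> x = Suc j"
  by (auto simp: sigma_apply)

lemma sigma_less_iff:
  "x \<noteq> y \<Longrightarrow> sigma j y < sigma j x \<longleftrightarrow> (y < x) \<noteq> ({x, y} = {j, Suc j})"
  by (auto simp: sigma_apply doubleton_eq_iff)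

lemma sigma_permutes: "j \<in> {1..<n} \<Longrightarrow> sigma j permutes {1..n}"
  unfolding sigma_def by (rule permutes_swap_id) auto

lemma word_perm_Nil [simp]: "word_perm [] = id"
  by (simp add: word_perm_def)

lemma word_perm_Cons [simp]: "word_perm (j # t) = sigma j \<circ> word_perm t"
  by (simp add: word_perm_def)

lemma word_perm_append: "word_perm (u @ v) = word_perm u \<circ> word_perm v"
  by (induction u) (simp_all add: comp_assoc)

lemma bij_sigma: "bij (sigma j)"
  by (simp add: sigma_def)

lemma bij_word_perm: "bij (word_perm t)"
  by (induction t) (simp_all only: word_perm_Nil word_perm_Cons bij_id bij_sigma bij_comp)

lemma inj_word_perm: "inj (word_perm t)"
  using bij_word_perm bij_is_inj by blast

lemma word_perm_rev: "word_perm (rev t) = inv (word_perm t)"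
proof -
  have "word_perm t \<circ> word_perm (rev t) = id" for t
    by (induction t) (simp_all add: word_perm_append fun_eq_iff)
  from this[of t] this[of "rev t"] show ?thesis
    by (simp add: inv_unique_comp)
qed

lemma is_word_Cons [simp]: "is_word n (j # t) \<longleftrightarrow> j \<in> {1..<n} \<and> is_word n t"
  by (simp add: is_word_def)

lemma is_word_append [simp]: "is_word n (u @ v) \<longleftrightarrow> is_word n u \<and> is_word n v"
  by (auto simp: is_word_def)

lemma is_word_rev [simp]: "is_word n (rev t) \<longleftrightarrow> is_word n t"
  by (simp add: is_word_def)

lemma word_perm_permutes: "is_word n t \<Longrightarrow> word_perm t permutes {1..n}"
  by (induction t) (auto simp only: word_perm_Nil word_perm_Cons is_word_Cons
      intro: permutes_id permutes_compose sigma_permutes)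

lemma word_perm_le_iff_notin: "j \<notin> set u \<Longrightarrow> word_perm u x \<le> j \<longleftrightarrow> x \<le> j"
  by (induction u arbitrary: x) (auto simp: sigma_le_iff_other)

lemma word_perm_fixed: "x \<notin> set u \<Longrightarrow> x - 1 \<notin> set u \<Longrightarrow> word_perm u x = x"
  by (induction u) (auto simp: sigma_apply)

definition inversions :: "nat \<Rightarrow> (nat \<Rightarrow> nat) \<Rightarrow> (nat \<times> nat) set" where
  "inversions n f = {(a, b). a \<in> {1..n} \<and> b \<in> {1..n} \<and> a < b \<and> f b < f a}"

lemma finite_inversions [simp]: "finite (inversions n f)"
  by (rule finite_subset[of _ "{1..n} \<times> {1..n}"]) (auto simp: inversions_def)

lemma inversions_id [simp]: "inversions n id = {}"
  by (auto simp: inversions_def)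

lemma inversion_sigma_comp_iff:
  assumes f: "f permutes {1..n}" and p: "f p = j" and q: "f q = Suc j"
    and ab: "a \<in> {1..n}" "b \<in> {1..n}" "a < b"
  shows "(a, b) \<in> inversions n (sigma j \<circ> f) \<longleftrightarrow> ((a, b) \<in> inversions n f) \<noteq> ({a, b} = {p, q})"
proof -
  have inj: "inj f"
    using f by (rule permutes_inj)
  then have "f a \<noteq> f b"
    using \<open>a < b\<close> by (metis injD less_irrefl)
  moreover have "{f a, f b} = {j, Suc j} \<longleftrightarrow> {a, b} = {p, q}"
    using inj_image_eq_iff[OF inj, of "{a, b}" "{p, q}"] p q by auto
  ultimately show ?thesis
    using ab sigma_less_iff[of "f a" "f b" j] by (simp add: inversions_def)
qed

lemma card_inversions_sigma_comp:
  assumes f: "f permutes {1..n}" and j: "j \<in> {1..<n}" and p: "f p = j" and q: "f q = Suc j"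
  shows "p < q \<Longrightarrow> card (inversions n (sigma j \<circ> f)) = Suc (card (inversions n f))"
    and "q < p \<Longrightarrow> Suc (card (inversions n (sigma j \<circ> f))) = card (inversions n f)"
proof -
  have pq: "p \<in> {1..n}" "q \<in> {1..n}"
    using permutes_in_image[OF f, of p] permutes_in_image[OF f, of q] p q j by auto
  have mem: "x \<in> inversions n (sigma j \<circ> f) \<longleftrightarrow>
      (x \<in> inversions n f) \<noteq> (x = (min p q, max p q))" for x
  proof (cases x)
    case (Pair a b)
    show ?thesis
    proof (cases "a \<in> {1..n} \<and> b \<in> {1..n} \<and> a < b")
      case True
      then have "{a, b} = {p, q} \<longleftrightarrow> (a, b) = (min p q, max p q)"
        by (auto simp: doubleton_eq_iff min_def max_def)
      then show ?thesis
        using inversion_sigma_comp_iff[OF f p q] True Pair by simp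
    next
      case False
      have "p \<noteq> q"
        using p q by auto
      then show ?thesis
        using False Pair pq by (auto simp: inversions_def min_def max_def)
    qed
  qed
  show "card (inversions n (sigma j \<circ> f)) = Suc (card (inversions n f))" if "p < q"
  proof -
    have "(p, q) \<notin> inversions n f"
      using p q by (simp add: inversions_def)
    moreover from this have "inversions n (sigma j \<circ> f) = insert (p, q) (inversions n f)"
      using mem \<open>p < q\<close> by auto
    ultimately show ?thesis
      by simp
  qed
  show "Suc (card (inversions n (sigma j \<circ> f))) = card (inversions n f)" if "q < p"
  proof -
    have "(q, p) \<in> inversions n f"
      using p q pq \<open>q < p\<close> by (simp add: inversions_def)
    moreover from this have "inversions n (sigma j \<circ> f) = inversions n f - {(q, p)}"
      using mem \<open>q < p\<close> by auto
    ultimately show ?thesis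
      by (metis card_Suc_Diff1 finite_inversions)
  qed
qed

lemma card_inversions_word_perm_le: "is_word n t \<Longrightarrow> card (inversions n (word_perm t)) \<le> length t"
proof (induction t)
  case Nil
  show ?case
    by (simp only: word_perm_Nil inversions_id) simp
next
  case (Cons j t)
  let ?f = "word_perm t"
  have f: "?f permutes {1..n}" and j: "j \<in> {1..<n}"
    using Cons.prems word_perm_permutes by auto
  obtain p q where p: "?f p = j" and q: "?f q = Suc j"
    using permutes_surj[OF f] by (metis surjD)
  have "p \<noteq> q"
    using p q by auto
  then have "card (inversions n (sigma j \<circ> ?f)) \<le> Suc (card (inversions n ?f))"
    using card_inversions_sigma_comp[OF f j p q] by (cases "p < q") auto
  moreover have "card (inversions n ?f) \<le> length t"
    using Cons by simp
  ultimately show ?case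
    by (simp only: word_perm_Cons length_Cons)
qed

lemma permutes_ascending_eq_id:
  assumes g: "g permutes {1..n}" and asc: "\<forall>v\<in>{1..<n}. g v < g (Suc v)"
  shows "g = id"
proof (rule permutes_natset_ge[OF g], rule ballI)
  show "x \<le> g x" if "x \<in> {1..n}" for x
    using that
  proof (induction x)
    case 0
    then show ?case by simp
  next
    case (Suc x)
    show ?case
    proof (cases "x = 0")
      case True
      then show ?thesis
        using Suc.prems permutes_in_image[OF g] by fastforce
    next
      case False
      then have "x \<le> g x" "g x < g (Suc x)"
        using Suc asc by auto
      then show ?thesis by simp
    qed
  qed
qed

text \<open>Bubble sort: for a descent v of the inverse permutation, composing with sigma v removes
  one inversion.\<close>

lemma exists_word_length_inversions:
  "f permutes {1..n} \<Longrightarrow> \<exists>t. is_word n t \<and> word_perm t = f \<and> length t = card (inversions n f)"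
proof (induction "card (inversions n f)" arbitrary: f)
  case 0
  have "f v < f (Suc v)" if "v \<in> {1..<n}" for v
  proof -
    have "(v, Suc v) \<notin> inversions n f"
      using 0 by simp
    moreover have "f v \<noteq> f (Suc v)"
      using permutes_inj[OF 0(2)] by (metis injD n_not_Suc_n)
    ultimately show ?thesis
      using that by (auto simp: inversions_def)
  qed
  then have "f = id"
    using permutes_ascending_eq_id[OF 0(2)] by blast
  then show ?case
    using 0 by (intro exI[of _ "[]"]) (simp add: is_word_def)
next
  case (Suc k)
  note f = \<open>f permutes {1..n}\<close>
  have "f \<noteq> id"
    using Suc.hyps(2) by auto
  then have "inv f \<noteq> id"
    using permutes_inv_inv[OF f] by (metis inv_id)
  then obtain v where v: "v \<in> {1..<n}" and descent: "\<not> inv f v < inv f (Suc v)"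
    using permutes_ascending_eq_id[OF permutes_inv[OF f]] by blast
  have "inv f (Suc v) < inv f v"
    using descent permutes_inj[OF permutes_inv[OF f]] by (metis injD linorder_neqE_nat n_not_Suc_n)
  then have "Suc (card (inversions n (sigma v \<circ> f))) = card (inversions n f)"
    using card_inversions_sigma_comp(2)[OF f v] permutes_inverses(1)[OF f] by blast
  moreover have "sigma v \<circ> f permutes {1..n}"
    using f sigma_permutes[OF v] by (rule permutes_compose)
  ultimately obtain t where t: "is_word n t" "word_perm t = sigma v \<circ> f" "length t = k"
    using Suc by (metis Suc_inject)
  then have "word_perm (v # t) = f"
    by (simp add: fun_eq_iff)
  then show ?case
    using t v Suc.hyps(2) by (intro exI[of _ "v # t"]) auto
qed

definition reduced :: "nat \<Rightarrow> nat list \<Rightarrow> bool" where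
  "reduced n t \<longleftrightarrow> is_word n t \<and> length t = card (inversions n (word_perm t))"

lemma reduced_word_imp_reduced:
  assumes "reduced_word n w t"
  shows "reduced n t"
proof -
  have t: "is_word n t" "word_perm t = w"
    using assms by (auto simp: reduced_word_def)
  obtain t0 where "is_word n t0" "word_perm t0 = w" "length t0 = card (inversions n w)"
    using exists_word_length_inversions word_perm_permutes[OF t(1)] t(2) by blast
  then have "length t \<le> card (inversions n w)"
    using assms by (auto simp: reduced_word_def)
  then show ?thesis
    using card_inversions_word_perm_le[OF t(1)] t by (simp add: reduced_def)
qed

lemma reduced_Cons:
  assumes red: "reduced n (j # t)"
  shows "reduced n t"
    and "word_perm t p = j \<Longrightarrow> word_perm t q = Suc j \<Longrightarrow> p < q"
proof -
  let ?f = "word_perm t"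
  have t: "is_word n t" and j: "j \<in> {1..<n}"
    using red by (auto simp: reduced_def)
  have f: "?f permutes {1..n}"
    using t by (rule word_perm_permutes)
  have len: "Suc (length t) = card (inversions n (sigma j \<circ> ?f))"
    using red by (simp only: reduced_def word_perm_Cons length_Cons)
  have le: "card (inversions n ?f) \<le> length t"
    using t by (rule card_inversions_word_perm_le)
  obtain p0 q0 where p0: "?f p0 = j" and q0: "?f q0 = Suc j"
    using permutes_surj[OF f] by (metis surjD)
  have "\<not> q0 < p0"
    using card_inversions_sigma_comp(2)[OF f j p0 q0] len le by linarith
  moreover have "p0 \<noteq> q0"
    using p0 q0 by auto
  ultimately have "p0 < q0"
    by simp
  then show "reduced n t"
    using card_inversions_sigma_comp(1)[OF f j p0 q0] len le t by (simp add: reduced_def)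
  show "p < q" if "?f p = j" "?f q = Suc j"
    using \<open>p0 < q0\<close> p0 q0 that inj_word_perm[of t] by (metis injD)
qed

lemma reduced_append2: "reduced n (u @ v) \<Longrightarrow> reduced n v"
  by (induction u) (auto dest: reduced_Cons(1))

lemma card_inversions_inv_le:
  assumes f: "f permutes {1..n}"
  shows "card (inversions n (inv f)) \<le> card (inversions n f)"
proof (rule card_inj_on_le)
  let ?h = "\<lambda>(a, b). (inv f b, inv f a)"
  show "inj_on ?h (inversions n (inv f))"
    using permutes_inj[OF permutes_inv[OF f]] by (auto simp: inj_on_def inj_def)
  show "?h ` inversions n (inv f) \<subseteq> inversions n f"
  proof clarify
    fix a b
    assume "(a, b) \<in> inversions n (inv f)"
    moreover have "inv f a \<in> {1..n}" "inv f b \<in> {1..n}"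
      using calculation permutes_in_image[OF permutes_inv[OF f]] by (auto simp: inversions_def)
    ultimately show "(inv f b, inv f a) \<in> inversions n f"
      by (simp add: inversions_def permutes_inverses(1)[OF f])
  qed
qed simp

lemma card_inversions_inv:
  "f permutes {1..n} \<Longrightarrow> card (inversions n (inv f)) = card (inversions n f)"
  using card_inversions_inv_le card_inversions_inv_le[OF permutes_inv]
  by (metis le_antisym permutes_inv_inv)

lemma reduced_rev: "reduced n t \<Longrightarrow> reduced n (rev t)"
  using card_inversions_inv[OF word_perm_permutes]
  by (simp add: reduced_def word_perm_rev)

lemma reduced_append1: "reduced n (u @ v) \<Longrightarrow> reduced n u"
  using reduced_rev reduced_append2[of n "rev v" "rev u"] by (metis rev_append rev_rev_ident)

definition rank :: "nat \<Rightarrow> (nat \<Rightarrow> nat) \<Rightarrow> nat \<Rightarrow> nat" where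
  "rank j f m = card {x \<in> {1..m}. f x \<le> j}"

lemma rank_sigma_comp_other: "k \<noteq> j \<Longrightarrow> rank j (sigma k \<circ> f) m = rank j f m"
  by (simp add: rank_def sigma_le_iff_other)

lemma rank_sigma_comp:
  assumes f: "f permutes {1..n}" and j: "j \<in> {1..<n}" and p: "f p = j" and q: "f q = Suc j"
    and "p < q"
  shows "rank j (sigma j \<circ> f) m + (if p \<le> m \<and> m < q then 1 else 0) = rank j f m"
proof -
  define X where "X = {x \<in> {1..m}. f x \<le> j}"
  have "p \<ge> 1"
    using permutes_in_image[OF f, of p] p j by auto
  have fp: "f x = j \<longleftrightarrow> x = p" and fq: "f x = Suc j \<longleftrightarrow> x = q" for x
    using permutes_inj[OF f] p q by (metis injD)+
  have "{x \<in> {1..m}. sigma j (f x) \<le> j} = (X - {p}) \<union> ({q} \<inter> {1..m})"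
  proof (rule set_eqI)
    show "x \<in> {x \<in> {1..m}. sigma j (f x) \<le> j} \<longleftrightarrow> x \<in> (X - {p}) \<union> ({q} \<inter> {1..m})" for x
      using fp[of x] fq[of x] by (auto simp: X_def sigma_le_iff_same)
  qed
  then have rank_comp: "rank j (sigma j \<circ> f) m = card ((X - {p}) \<union> ({q} \<inter> {1..m}))"
    by (simp add: rank_def)
  have rank_f: "rank j f m = card X"
    by (simp add: rank_def X_def)
  have "finite X" "q \<notin> X"
    using q by (auto simp: X_def)
  have "p \<in> X \<longleftrightarrow> p \<le> m"
    using p \<open>p \<ge> 1\<close> by (simp add: X_def)
  have card_X: "card X = Suc (card (X - {p}))" if "p \<le> m"
    using card.remove[OF \<open>finite X\<close>, of p] \<open>p \<in> X \<longleftrightarrow> p \<le> m\<close> that by simp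
  show ?thesis
  proof (cases "q \<le> m")
    case True
    then show ?thesis
      using \<open>p < q\<close> \<open>finite X\<close> \<open>q \<notin> X\<close> card_X
      by (simp add: rank_comp rank_f)
  next
    case False
    then show ?thesis
      using \<open>p \<in> X \<longleftrightarrow> p \<le> m\<close> card_X by (simp add: rank_comp rank_f)
  qed
qed

lemma rank_le_min:
  assumes f: "f permutes {1..n}"
  shows "rank j f m \<le> min m j"
proof -
  let ?X = "{x \<in> {1..m}. f x \<le> j}"
  have "card ?X \<le> card {1..m}"
    by (rule card_mono) auto
  moreover have "f ` ?X \<subseteq> {1..j}"
  proof clarify
    fix x
    assume "x \<in> {1..m}" "f x \<le> j"
    moreover have "f x \<ge> 1"
      using calculation permutes_in_image[OF f, of x] permutes_not_in[OF f, of x] by fastforce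
    ultimately show "f x \<in> {1..j}"
      by simp
  qed
  then have "card ?X \<le> card {1..j}"
    using permutes_inj[OF f] by (intro card_inj_on_le) (auto intro: inj_on_subset)
  ultimately show ?thesis
    by (simp add: rank_def)
qed

lemma rank_reduced_append_le:
  "reduced n (u @ v) \<Longrightarrow> rank j (word_perm (u @ v)) m \<le> rank j (word_perm v) m"
proof (induction u)
  case Nil
  then show ?case by simp
next
  case (Cons k u)
  let ?f = "word_perm (u @ v)"
  have red: "reduced n (k # u @ v)"
    using Cons.prems by simp
  have "rank j (sigma k \<circ> ?f) m \<le> rank j ?f m"
  proof (cases "k = j")
    case True
    have f: "?f permutes {1..n}" and k: "k \<in> {1..<n}"
      using red word_perm_permutes by (auto simp: reduced_def)
    obtain p q where p: "?f p = k" and q: "?f q = Suc k"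
      using permutes_surj[OF f] by (metis surjD)
    show ?thesis
      using rank_sigma_comp[OF f k p q reduced_Cons(2)[OF red p q], of m] True by simp
  qed (simp add: rank_sigma_comp_other)
  then show ?case
    using Cons.IH[OF reduced_Cons(1)[OF red]] by (simp only: append_Cons word_perm_Cons)
qed

lemma rank_less_at_occurrence:
  assumes red: "reduced n (u @ j # v)" and p: "word_perm v p = j" and q: "word_perm v q = Suc j"
    and m: "p \<le> m" "m < q"
  shows "rank j (word_perm (u @ j # v)) m < min m j"
proof -
  have red': "reduced n (j # v)"
    using red by (rule reduced_append2)
  have f: "word_perm v permutes {1..n}" and j: "j \<in> {1..<n}"
    using red' word_perm_permutes by (auto simp: reduced_def)
  have "rank j (word_perm (u @ j # v)) m \<le> rank j (sigma j \<circ> word_perm v) m"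
    using rank_reduced_append_le[OF red] by simp
  also have "\<dots> < rank j (word_perm v) m"
    using rank_sigma_comp[OF f j p q reduced_Cons(2)[OF red' p q], of m] m by simp
  also have "\<dots> \<le> min m j"
    using f by (rule rank_le_min)
  finally show ?thesis .
qed

lemma notin_reduced_if_le_invariant:
  assumes red: "reduced n t" and inv: "\<forall>x. word_perm t x \<le> j \<longleftrightarrow> x \<le> j"
  shows "j \<notin> set t"
proof
  assume "j \<in> set t"
  then obtain u v where t: "t = u @ j # v"
    by (meson split_list)
  have red': "reduced n (j # v)"
    using red unfolding t by (rule reduced_append2)
  have f: "word_perm v permutes {1..n}" and j: "j \<in> {1..<n}"
    using red' word_perm_permutes by (auto simp: reduced_def)
  obtain p q where p: "word_perm v p = j" and q: "word_perm v q = Suc j"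
    using permutes_surj[OF f] by (metis surjD)
  have "p < q"
    using red' p q by (rule reduced_Cons(2))
  then have "rank j (word_perm t) p < min p j"
    using rank_less_at_occurrence[of n u j v p q p] red t p q by simp
  moreover have "{x \<in> {1..p}. word_perm t x \<le> j} = {1..min p j}"
  proof (rule set_eqI)
    show "x \<in> {x \<in> {1..p}. word_perm t x \<le> j} \<longleftrightarrow> x \<in> {1..min p j}" for x
      using inv[rule_format, of x] by auto
  qed
  then have "rank j (word_perm t) p = min p j"
    unfolding rank_def by simp
  ultimately show False
    by simp
qed

definition single_crossing :: "(nat \<Rightarrow> nat) \<Rightarrow> nat \<Rightarrow> nat \<Rightarrow> nat \<Rightarrow> bool" where
  "single_crossing w j a b \<longleftrightarrow>
     1 \<le> a \<and> a \<le> j \<and> j < b \<and> (\<forall>x. w x \<le> j \<longleftrightarrow> x \<le> j \<and> x \<noteq> a \<or> x = b)"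

lemma single_crossingD:
  assumes "single_crossing w j a b"
  shows "1 \<le> a" "a \<le> j" "j < b" "w x \<le> j \<longleftrightarrow> x \<le> j \<and> x \<noteq> a \<or> x = b"
  using assms by (simp_all add: single_crossing_def)

lemma single_crossing_word:
  assumes v: "is_word n v" and u_j: "j \<notin> set u" and v_j: "j \<notin> set v" and "1 \<le> j"
    and a: "word_perm v a = j" and b: "word_perm v b = Suc j"
  shows "single_crossing (word_perm (u @ j # v)) j a b"
  unfolding single_crossing_def
proof (intro conjI allI)
  have "0 \<notin> set v"
    using v by (auto simp: is_word_def)
  then have "word_perm v 0 = 0"
    by (simp add: word_perm_fixed)
  then show "1 \<le> a"
    using a \<open>1 \<le> j\<close> by (cases a) auto
  show "a \<le> j" "j < b"
    using word_perm_le_iff_notin[OF v_j, of a] word_perm_le_iff_notin[OF v_j, of b] a b by auto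
  fix x
  have "word_perm v x = j \<longleftrightarrow> x = a" "word_perm v x = Suc j \<longleftrightarrow> x = b"
    using inj_word_perm[of v] a b by (metis injD)+
  have "word_perm (u @ j # v) x \<le> j \<longleftrightarrow> sigma j (word_perm v x) \<le> j"
    by (simp add: word_perm_append word_perm_le_iff_notin[OF u_j])
  also have "\<dots> \<longleftrightarrow> word_perm v x < j \<or> word_perm v x = Suc j"
    by (rule sigma_le_iff_same)
  also have "\<dots> \<longleftrightarrow> x \<le> j \<and> x \<noteq> a \<or> x = b"
    using word_perm_le_iff_notin[OF v_j, of x] \<open>word_perm v x = j \<longleftrightarrow> x = a\<close>
      \<open>word_perm v x = Suc j \<longleftrightarrow> x = b\<close> \<open>a \<le> j\<close> \<open>j < b\<close> by auto
  finally show "word_perm (u @ j # v) x \<le> j \<longleftrightarrow> x \<le> j \<and> x \<noteq> a \<or> x = b" .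
qed

lemma single_crossing_inv:
  assumes w: "w permutes {1..n}" and sc: "single_crossing w j a b"
  shows "single_crossing (inv w) j (w b) (w a)"
proof -
  note S = single_crossingD(4)[OF sc] and ab = single_crossingD(1-3)[OF sc]
  have "w 0 = 0"
    using w by (simp add: permutes_not_in)
  then have "w b \<noteq> 0"
    using permutes_inj[OF w] ab by (metis injD not_less_zero)
  moreover have "inv w y \<le> j \<longleftrightarrow> y \<le> j \<and> y \<noteq> w b \<or> y = w a" for y
    using S[of "inv w y"] ab permutes_inverses[OF w] by (metis leD)
  ultimately show ?thesis
    using S[of a] S[of b] ab by (auto simp: single_crossing_def)
qed

lemma rank_single_crossing:
  assumes sc: "single_crossing w j a b" and m: "m < a \<or> b \<le> m"
  shows "rank j w m = min m j"
proof -
  note S = single_crossingD(4)[OF sc] and ab = single_crossingD(1-3)[OF sc]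
  show ?thesis
  proof (cases "m < a")
    case True
    then have "{x \<in> {1..m}. w x \<le> j} = {1..m}"
      using S ab by fastforce
    then show ?thesis
      using True ab by (simp add: rank_def)
  next
    case False
    then have "{x \<in> {1..m}. w x \<le> j} = insert b ({1..j} - {a})"
      using S ab m by fastforce
    then show ?thesis
      using False ab m by (simp add: rank_def)
  qed
qed

lemma occurrence_within_crossing:
  assumes red: "reduced n (u @ j # v)" and sc: "single_crossing (word_perm (u @ j # v)) j a b"
    and p: "word_perm v p = j" and q: "word_perm v q = Suc j"
  shows "a \<le> p \<and> p < q \<and> q \<le> b"
proof -
  have "p < q"
    using reduced_append2[OF red] p q by (rule reduced_Cons(2))
  have less: "rank j (word_perm (u @ j # v)) m < min m j" if "p \<le> m" "m < q" for m
    using rank_less_at_occurrence[OF red p q that] .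
  have "a \<le> p"
    using less[of p] rank_single_crossing[OF sc, of p] \<open>p < q\<close> by fastforce
  moreover have "q \<le> b"
    using less[of "max p b"] rank_single_crossing[OF sc, of "max p b"] \<open>p < q\<close> by fastforce
  ultimately show ?thesis
    using \<open>p < q\<close> by simp
qed

definition unconfined_crossing :: "(nat \<Rightarrow> nat) \<Rightarrow> nat \<Rightarrow> nat \<Rightarrow> nat \<Rightarrow> bool" where
  "unconfined_crossing w i a b \<longleftrightarrow> (w a = Suc i \<or> b = Suc i) \<and> (w b = i \<or> a = i)"

lemma unconfined_crossing_inversion_eq:
  assumes inj: "inj w" and sc: "single_crossing w i a b" and uc: "unconfined_crossing w i a b"
    and pq: "a \<le> p" "p < q" "q \<le> b" and vals: "w b \<le> w q" "w q < w p" "w p \<le> w a"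
  shows "p = a \<and> q = b"
proof -
  note S = single_crossingD(4)[OF sc]
  have w_eq: "w x = w y \<Longrightarrow> x = y" for x y
    using inj by (rule injD)
  consider "w a = Suc i" "w b = i" | "w a = Suc i" "a = i"
    | "b = Suc i" "w b = i" | "b = Suc i" "a = i"
    using uc by (auto simp: unconfined_crossing_def)
  then show ?thesis
  proof cases
    case 1
    then have "w p = w a" "w q = w b"
      using vals by simp_all
    then show ?thesis
      using w_eq by blast
  next
    case 2
    have "q = b"
    proof (rule ccontr)
      assume "q \<noteq> b"
      then have "i < w q"
        using S[of q] pq \<open>a = i\<close> by auto
      then show False
        using vals \<open>w a = Suc i\<close> by simp
    qed
    moreover have "p = a"
    proof (rule ccontr)
      assume "p \<noteq> a"
      then have "i < w p"
        using S[of p] pq \<open>a = i\<close> \<open>q = b\<close> by auto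
      then have "w p = w a"
        using vals \<open>w a = Suc i\<close> by simp
      then show False
        using w_eq \<open>p \<noteq> a\<close> by blast
    qed
    ultimately show ?thesis
      by simp
  next
    case 3
    have "p = a"
    proof (rule ccontr)
      assume "p \<noteq> a"
      then have "w p \<le> i"
        using S[of p] pq \<open>b = Suc i\<close> by auto
      then show False
        using vals \<open>w b = i\<close> by simp
    qed
    moreover have "q = b"
    proof (rule ccontr)
      assume "q \<noteq> b"
      then have "w q \<le> i"
        using S[of q] pq \<open>b = Suc i\<close> \<open>p = a\<close> by auto
      then have "w q = w b"
        using vals \<open>w b = i\<close> by simp
      then show False
        using w_eq \<open>q \<noteq> b\<close> by blast
    qed
    ultimately show ?thesis
      by simp
  next
    case 4
    then show ?thesis
      using pq by simp
  qed
qed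

lemma occurrence_at_unconfined_crossing:
  assumes red: "reduced n (u @ i # v)"
    and sc: "single_crossing (word_perm (u @ i # v)) i a b"
    and uc: "unconfined_crossing (word_perm (u @ i # v)) i a b"
  shows "word_perm v a = i \<and> word_perm v b = Suc i"
proof -
  let ?w = "word_perm (u @ i # v)"
  have w: "?w permutes {1..n}" and v: "word_perm v permutes {1..n}" and i: "i \<in> {1..<n}"
    using red word_perm_permutes by (auto simp: reduced_def)
  obtain p q where p: "word_perm v p = i" and q: "word_perm v q = Suc i"
    using permutes_surj[OF v] by (metis surjD)
  have w_p: "?w p = word_perm u (Suc i)" and w_q: "?w q = word_perm u i"
    using p q by (simp_all add: word_perm_append sigma_apply)
  have "a \<le> p \<and> p < q \<and> q \<le> b"
    using red sc p q by (rule occurrence_within_crossing)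
  moreover have "?w b \<le> word_perm u i \<and> word_perm u i < word_perm u (Suc i) \<and>
      word_perm u (Suc i) \<le> ?w a"
  proof -
    have rev: "rev (u @ i # v) = rev v @ i # rev u"
      by simp
    have "reduced n (rev v @ i # rev u)"
      using reduced_rev[OF red] unfolding rev .
    moreover have "single_crossing (word_perm (rev v @ i # rev u)) i (?w b) (?w a)"
      using single_crossing_inv[OF w sc] word_perm_rev[of "u @ i # v"] unfolding rev by simp
    moreover have "word_perm (rev u) (word_perm u i) = i"
      and "word_perm (rev u) (word_perm u (Suc i)) = Suc i"
      by (simp_all add: word_perm_rev inv_f_f inj_word_perm)
    ultimately show ?thesis
      by (rule occurrence_within_crossing)
  qed
  ultimately have "p = a \<and> q = b"
    using w_p w_q by (intro unconfined_crossing_inversion_eq[OF inj_word_perm sc uc]) auto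
  then show ?thesis
    using p q by simp
qed

lemma count_list_eq_1_if_unconfined_crossing:
  assumes red: "reduced n t" and sc: "single_crossing (word_perm t) i a b"
    and uc: "unconfined_crossing (word_perm t) i a b"
  shows "count_list t i = 1"
proof -
  have "i \<in> set t"
  proof (rule ccontr)
    assume "i \<notin> set t"
    then have "word_perm t b \<le> i \<longleftrightarrow> b \<le> i"
      by (rule word_perm_le_iff_notin)
    then show False
      using single_crossingD[OF sc] by simp
  qed
  then obtain u v where t: "t = u @ i # v" and "i \<notin> set v"
    using split_list_last by metis
  have "i \<notin> set u"
  proof
    assume "i \<in> set u"
    then obtain u1 u2 where u: "u = u1 @ i # u2" and "i \<notin> set u2"
      using split_list_last by metis
    have "word_perm v a = i"
      using occurrence_at_unconfined_crossing red sc uc t by blast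
    moreover have "word_perm (u2 @ i # v) a = i"
      using occurrence_at_unconfined_crossing[of n u1 i "u2 @ i # v"] red sc uc t u by simp
    ultimately have "word_perm u2 (Suc i) = i"
      by (simp add: word_perm_append sigma_apply)
    then show False
      using word_perm_le_iff_notin[OF \<open>i \<notin> set u2\<close>, of "Suc i"] by simp
  qed
  then show ?thesis
    using t \<open>i \<notin> set v\<close> by simp
qed

lemma between_single_occurrence_iff:
  assumes u: "i \<notin> set u" and v: "i \<notin> set v"
  shows "between (u @ i # v) i j \<longleftrightarrow> j \<in> set u \<and> j \<in> set v"
proof
  assume "between (u @ i # v) i j"
  then obtain a p b where h: "a < p" "p < b" "b < length (u @ i # v)"
    "(u @ i # v) ! p = i" "(u @ i # v) ! a = j" "(u @ i # v) ! b = j"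
    unfolding between_def by blast
  have "p = length u"
  proof (rule ccontr)
    assume "p \<noteq> length u"
    then have "(u @ i # v) ! p \<in> set u \<union> set v"
      using h(2,3) by (auto simp: nth_append nth_Cons' split: if_splits)
    then show False
      using h(4) u v by auto
  qed
  then have "(u @ i # v) ! a \<in> set u" "(u @ i # v) ! b \<in> set v"
    using h(1-3) by (auto simp: nth_append nth_Cons')
  then show "j \<in> set u \<and> j \<in> set v"
    using h(5,6) by simp
next
  assume "j \<in> set u \<and> j \<in> set v"
  then obtain a b where a: "a < length u" "u ! a = j" and b: "b < length v" "v ! b = j"
    by (meson in_set_conv_nth)
  show "between (u @ i # v) i j"
    unfolding between_def
  proof (intro exI conjI)
    show "a < length u" "length u < length u + Suc b" "length u + Suc b < length (u @ i # v)"
      using a b by simp_all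
    show "(u @ i # v) ! length u = i" "(u @ i # v) ! a = j" "(u @ i # v) ! (length u + Suc b) = j"
      using a b by (simp_all add: nth_append)
  qed
qed

lemma word_perm_fixed_iff_upper:
  assumes red: "reduced n u" and j: "j \<notin> set u"
  shows "word_perm u (Suc j) = Suc j \<longleftrightarrow> Suc j \<notin> set u"
proof
  assume fixed: "word_perm u (Suc j) = Suc j"
  have "word_perm u x \<le> Suc j \<longleftrightarrow> x \<le> Suc j" for x
    using word_perm_le_iff_notin[OF j, of x] fixed inj_word_perm[of u]
    by (metis injD le_Suc_eq)
  then show "Suc j \<notin> set u"
    using red notin_reduced_if_le_invariant by blast
qed (use j in \<open>simp add: word_perm_fixed\<close>)

lemma word_perm_fixed_iff_lower:
  assumes red: "reduced n u" and j: "Suc j \<notin> set u"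
  shows "word_perm u (Suc j) = Suc j \<longleftrightarrow> j \<notin> set u"
proof
  assume fixed: "word_perm u (Suc j) = Suc j"
  have "word_perm u x \<le> j \<longleftrightarrow> x \<le> j" for x
    using word_perm_le_iff_notin[OF j, of x] fixed inj_word_perm[of u]
    by (metis injD le_Suc_eq)
  then show "j \<notin> set u"
    using red notin_reduced_if_le_invariant by blast
qed (use j in \<open>simp add: word_perm_fixed\<close>)

lemma unconfined_iff_unconfined_crossing:
  assumes red: "reduced n (u @ i # v)" and u: "i \<notin> set u" and v: "i \<notin> set v"
    and a: "word_perm v a = i" and b: "word_perm v b = Suc i"
  shows "unconfined (u @ i # v) i \<longleftrightarrow> unconfined_crossing (word_perm (u @ i # v)) i a b"
proof -
  let ?w = "word_perm (u @ i # v)"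
  have red_u: "reduced n u" and red_v: "reduced n v"
    using red reduced_append1 reduced_append2 reduced_Cons(1) by blast+
  have "0 \<notin> set u" "0 \<notin> set v" "1 \<le> i"
    using red by (auto simp: reduced_def is_word_def)
  then obtain k where k: "i = Suc k"
    using not0_implies_Suc by fastforce
  have inj_v: "word_perm v x = word_perm v y \<longleftrightarrow> x = y" for x y
    using inj_word_perm by (metis injD)
  have w_a: "?w a = word_perm u (Suc i)" and w_b: "?w b = word_perm u i"
    using a b by (simp_all add: word_perm_append sigma_apply)
  have upper: "\<not> (Suc i \<in> set u \<and> Suc i \<in> set v) \<longleftrightarrow> ?w a = Suc i \<or> b = Suc i"
    using word_perm_fixed_iff_upper[OF red_u u] word_perm_fixed_iff_upper[OF red_v v]
      inj_v[of b "Suc i"] b w_a by auto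
  have lower: "\<not> (k \<in> set u \<and> k \<in> set v) \<longleftrightarrow> ?w b = i \<or> a = i"
    using word_perm_fixed_iff_lower[OF red_u, of k] word_perm_fixed_iff_lower[OF red_v, of k]
      inj_v[of a i] a w_b u v k by auto
  have "unconfined (u @ i # v) i \<longleftrightarrow>
      \<not> (Suc i \<in> set u \<and> Suc i \<in> set v) \<and> \<not> (2 \<le> i \<and> k \<in> set u \<and> k \<in> set v)"
    using u v k by (simp add: unconfined_def between_single_occurrence_iff)
  also have "\<dots> \<longleftrightarrow> unconfined_crossing ?w i a b"
    using upper lower \<open>0 \<notin> set u\<close> k by (cases k) (auto simp: unconfined_crossing_def)
  finally show ?thesis .
qed

lemma unconfined_crossing_if_unconfined:
  assumes red: "reduced n s" and count: "count_list s i = 1" and unconf: "unconfined s i"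
  obtains a b where "single_crossing (word_perm s) i a b" "unconfined_crossing (word_perm s) i a b"
proof -
  obtain u v where s: "s = u @ i # v" and u: "i \<notin> set u" and v: "i \<notin> set v"
    using count_list_Suc_split_first[of s i 0] count by (auto simp: count_list_0_iff)
  have "is_word n v" "i \<in> {1..<n}"
    using red s by (auto simp: reduced_def)
  then obtain a b where a: "word_perm v a = i" and b: "word_perm v b = Suc i"
    using permutes_surj[OF word_perm_permutes] by (metis surjD)
  show ?thesis
  proof
    show "single_crossing (word_perm s) i a b"
      using single_crossing_word[OF \<open>is_word n v\<close> u v _ a b] \<open>i \<in> {1..<n}\<close> s by simp
    show "unconfined_crossing (word_perm s) i a b"
      using unconfined_iff_unconfined_crossing[of n u i v a b] red unconf s u v a b by simp
  qed
qed

lemma unconfined_if_unconfined_crossing: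
  assumes red: "reduced n t" and sc: "single_crossing (word_perm t) i a b"
    and uc: "unconfined_crossing (word_perm t) i a b"
  shows "count_list t i = 1 \<and> unconfined t i"
proof
  show count: "count_list t i = 1"
    using red sc uc by (rule count_list_eq_1_if_unconfined_crossing)
  then obtain u v where t: "t = u @ i # v" and u: "i \<notin> set u" and v: "i \<notin> set v"
    using count_list_Suc_split_first[of t i 0] by (auto simp: count_list_0_iff)
  have "word_perm v a = i" "word_perm v b = Suc i"
    using occurrence_at_unconfined_crossing[of n u i v a b] red sc uc t by simp_all
  then show "unconfined t i"
    using unconfined_iff_unconfined_crossing[of n u i v a b] red uc t u v by simp
qed

theorem lemma2p8:
  fixes n i :: nat and w :: "nat \<Rightarrow> nat" and s :: "nat list"
  assumes "w permutes {1..n}"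
    and "i \<in> supp n w"
    and "s \<in> R n w"
    and "count_list s i = 1"
    and "unconfined s i"
  shows "\<forall>t\<in>R n w. count_list t i = 1 \<and> unconfined t i"
proof
  fix t
  assume "t \<in> R n w"
  then have red_t: "reduced n t" and w_t: "word_perm t = w"
    using reduced_word_imp_reduced by (auto simp: R_def reduced_word_def)
  have red_s: "reduced n s" and w_s: "word_perm s = w"
    using assms(3) reduced_word_imp_reduced by (auto simp: R_def reduced_word_def)
  obtain a b where "single_crossing w i a b" "unconfined_crossing w i a b"
    using unconfined_crossing_if_unconfined[OF red_s assms(4,5)] w_s by metis
  then show "count_list t i = 1 \<and> unconfined t i"
    using unconfined_if_unconfined_crossing[OF red_t] w_t by simp
qed

end
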